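(* Let $B>0$ and $z>0$, and set $z_0:=\max\left(z,\ \frac{\pi}{B^2 e}\right)$. If $\nu\geq 1$ satisfies $$\nu\;\geq\;\frac12+\frac{\log(B)+z_0-\frac12\log\!\left(\frac{\pi}{z_0 e}\right)}{W_0\!\left(\frac{2}{z_0 e}\left(\log(B)+z_0-\frac12\log\!\left(\frac{\pi}{z_0 e}\right)\right)\right)},$$ then $K_\nu(z)>B$.
   Context: $K_\nu$ denotes the modified Bessel function of the second kind of real order $\nu$, considered for real argument $z>0$. $W_0$ denotes the principal branch of the Lambert $W$ function (the inverse of $w\mapsto we^w$ on $[-1,\infty)$). *)

theory Defs
  imports "HOL-Analysis.Analysis"
begin

text \<open>Modified Bessel function of the second kind, real order nu, real argument z > 0,
  via the standard integral representation (DLMF 10.32.9):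
  K_nu(z) = integral over t from 0 to infinity of exp(-z cosh t) cosh(nu t).\<close>
definition besselK :: "real \<Rightarrow> real \<Rightarrow> real" where
  "besselK nu z = integral {0..} (\<lambda>t. exp (- z * cosh t) * cosh (nu * t))"

definition lambertW0 :: "real \<Rightarrow> real" where
  "lambertW0 x = (THE w. w \<ge> -1 \<and> w * exp w = x)"

end

theory Submission
  imports Defs
begin

text \<open>Write z = 2a. Since cosh t >= e^t / 2, K_nu(2a) is at least e^(-a) / 2 times the
  integral of W(t) = exp(nu t - a e^t), whose exponent peaks at T = ln(nu / a). On [0, T] and
  [T, T + 2] the functions +-W / (|nu - a e^t| + sqrt nu) have derivative at most W, so the
  integral is at least about 2 W(T) / sqrt nu. This beats
  g_nu(z) = sqrt(pi / (z e)) e^(-z) (2 (nu - 1/2) / (z e))^(nu - 1/2) as soon as e z < 2 nu - 1.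
  Since g_nu decreases in z, K_nu(z) > g_nu(z0), and the hypothesis on nu, unwound through
  w e^w = x, says ln B <= ln g_nu(z0).\<close>

lemma cosh_ge_exp_half: "exp t / 2 \<le> cosh (t::real)"
  unfolding cosh_def by (simp add: divide_right_mono)

lemma besselK_integrand_le_exp:
  fixes z nu t :: real
  assumes z: "z > 0" and nu: "nu \<ge> 0" and t: "t \<ge> 0"
  shows "exp (- z * cosh t) * cosh (nu * t) \<le> exp ((nu + 1)^2 / z) * exp (- t)"
proof -
  have "1 + t + t^2/2 \<le> exp t"
    using exp_lower_Taylor_quadratic t by simp
  then have "t^2/4 \<le> cosh t"
    using cosh_ge_exp_half[of t] t by linarith
  then have quartic: "z*z*(t^2/4) \<le> z*z*cosh t"
    using z by (simp add: mult_left_mono)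
  have "(z*t/2 - (nu+1))^2 = z*z*(t^2/4) - z*t*(nu+1) + (nu+1)^2"
    by (simp add: power2_eq_square field_simps)
  then have square: "0 \<le> z*z*(t^2/4) - z*t*(nu+1) + (nu+1)^2"
    by (metis zero_le_power2)
  have "z * (nu*t - z * cosh t) = z*t*(nu+1) - z*t - z*z*cosh t"
    by (simp add: algebra_simps)
  moreover have "z * ((nu+1)^2/z - t) = (nu+1)^2 - z*t"
    using z by (simp add: field_simps)
  ultimately have "z * (nu*t - z * cosh t) \<le> z * ((nu+1)^2/z - t)"
    using quartic square by linarith
  then have "nu*t - z * cosh t \<le> (nu+1)^2/z - t"
    using z by simp
  then have "exp (- z * cosh t) * exp (nu*t) \<le> exp ((nu+1)^2/z) * exp (- t)"
    by (simp flip: exp_add)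
  moreover have "cosh (nu*t) \<le> exp (nu*t)"
    unfolding cosh_def using nu t by simp
  ultimately show ?thesis
    by (smt (verit) exp_gt_zero mult_left_mono)
qed

lemma besselK_integrand_integrable:
  fixes z nu :: real
  assumes "z > 0" and "nu \<ge> 0"
  shows "(\<lambda>t. exp (- z * cosh t) * cosh (nu * t)) integrable_on {0..}"
proof (rule measurable_bounded_by_integrable_imp_integrable_real)
  show "(\<lambda>t. exp (- z * cosh t) * cosh (nu * t)) \<in> borel_measurable (lebesgue_on {0..})"
    by (intro continuous_imp_measurable_on_sets_lebesgue continuous_intros) auto
  show "(\<lambda>t. exp ((nu+1)^2/z) * exp (- 1 * t)) integrable_on {0..}"
    by (intro integrable_on_mult_right integrable_on_exp_minus_to_infinity) auto
  show "\<bar>exp (- z * cosh t) * cosh (nu * t)\<bar> \<le> exp ((nu+1)^2/z) * exp (- 1 * t)"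
    if "t \<in> {0..}" for t
    using besselK_integrand_le_exp[OF assms, of t] that by simp
qed auto

lemma integral_besselK_integrand_le_besselK:
  fixes z nu b :: real
  assumes "z > 0" and "nu \<ge> 0"
  shows "integral {0..b} (\<lambda>t. exp (- z * cosh t) * cosh (nu * t)) \<le> besselK nu z"
  unfolding besselK_def
proof (rule integral_subset_le)
  show "(\<lambda>t. exp (- z * cosh t) * cosh (nu * t)) integrable_on {0..b}"
    by (intro integrable_continuous_real continuous_intros)
qed (use besselK_integrand_integrable[OF assms] in auto)

lemma exp_laplace_le_besselK_integrand:
  fixes a nu t :: real
  assumes a: "a > 0" and t: "t \<ge> 0"
  shows "exp (-a) / 2 * exp (nu*t - a * exp t) \<le> exp (- (2*a) * cosh t) * cosh (nu * t)"
proof -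
  have "a * exp (-t) \<le> a"
    using a t by (simp add: mult_left_le)
  then have "exp (- a - a * exp t) \<le> exp (- (2*a) * cosh t)"
    unfolding cosh_def by (simp add: field_simps)
  then have "exp (- a - a * exp t) * (exp (nu*t) / 2) \<le> exp (- (2*a) * cosh t) * cosh (nu * t)"
    using cosh_ge_exp_half[of "nu*t"] by (intro mult_mono) auto
  moreover have "exp (-a) / 2 * exp (nu*t - a * exp t) = exp (- a - a * exp t) * (exp (nu*t) / 2)"
    by (simp add: exp_diff exp_minus field_simps flip: exp_add)
  ultimately show ?thesis
    by simp
qed

lemma diff_le_integral_of_deriv_le:
  fixes G g W :: "real \<Rightarrow> real"
  assumes "a \<le> b"
    and "\<And>x. x \<in> {a..b} \<Longrightarrow> (G has_real_derivative g x) (at x within {a..b})"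
    and "\<And>x. x \<in> {a..b} \<Longrightarrow> g x \<le> W x"
    and "continuous_on {a..b} W"
  shows "G b - G a \<le> integral {a..b} W"
proof (rule has_integral_le)
  show "(g has_integral (G b - G a)) {a..b}"
    using assms(1,2) by (intro fundamental_theorem_of_calculus)
      (auto simp: has_real_derivative_iff_has_vector_derivative)
  show "(W has_integral integral {a..b} W) {a..b}"
    using assms(4) integrable_continuous_real by blast
qed (use assms(3) in auto)

lemma quotient_factor_le_one:
  fixes p s u :: real
  assumes "0 \<le> p" and "0 < s" and "u \<le> s * (p + s)"
  shows "(p * (p + s) + u) / (p + s)^2 \<le> 1"
proof -
  have "p * (p + s) + u \<le> (p + s)^2"
    using assms(3) by (simp add: power2_eq_square algebra_simps)
  then show ?thesis
    using assms(1,2) by (simp add: divide_le_eq)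
qed

lemma integral_laplace_left_ge:
  fixes nu a T :: real
  assumes nu: "nu \<ge> 1" and a: "a > 0" and T: "0 \<le> T" "a * exp T = nu"
  defines "W \<equiv> \<lambda>t. exp (nu*t - a * exp t)"
  shows "W T / sqrt nu - W 0 / (nu - a + sqrt nu) \<le> integral {0..T} W"
proof -
  define s where "s = sqrt nu"
  have s1: "s \<ge> 1" and ss: "s^2 = nu"
    using nu by (simp_all add: s_def)
  define D where "D = (\<lambda>t. nu - a * exp t + s)"
  define g where "g = (\<lambda>t. W t * (((nu - a * exp t) * D t + a * exp t) / (D t)^2))"
  have gap: "nu - a * exp t \<ge> 0" if "t \<in> {0..T}" for t
    using that a T by (smt (verit) atLeastAtMost_iff exp_le_cancel_iff mult_left_mono)
  have deriv: "((\<lambda>t. W t / D t) has_real_derivative g t) (at t within {0..T})"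
    if "t \<in> {0..T}" for t
  proof -
    have "D t \<noteq> 0"
      using gap[OF that] s1 unfolding D_def by linarith
    then have "((\<lambda>t. exp (nu*t - a * exp t) / (nu - a * exp t + s)) has_real_derivative
        ((exp (nu*t - a * exp t) * (nu * 1 - a * exp t)) * (nu - a * exp t + s)
          - exp (nu*t - a * exp t) * (0 - a * exp t)) / (nu - a * exp t + s)^2)
        (at t within {0..T})"
      unfolding D_def
      by (intro derivative_eq_intros DERIV_divide[THEN DERIV_cong]) (auto simp: power2_eq_square)
    then show ?thesis
      unfolding g_def W_def D_def by (simp add: field_simps power2_eq_square)
  qed
  have "g t \<le> W t" if "t \<in> {0..T}" for t
  proof -
    have "s * ((nu - a * exp t) + s) - a * exp t = (s + 1) * (nu - a * exp t)"
      using ss by (simp add: power2_eq_square algebra_simps)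
    moreover have "0 \<le> (s + 1) * (nu - a * exp t)"
      using gap[OF that] s1 by simp
    ultimately have "a * exp t \<le> s * ((nu - a * exp t) + s)"
      by linarith
    then have "((nu - a * exp t) * D t + a * exp t) / (D t)^2 \<le> 1"
      using gap[OF that] s1 unfolding D_def by (intro quotient_factor_le_one) auto
    then have "W t * (((nu - a * exp t) * D t + a * exp t) / (D t)^2) \<le> W t * 1"
      by (intro mult_left_mono) (auto simp: W_def)
    then show ?thesis
      unfolding g_def by simp
  qed
  moreover have "continuous_on {0..T} W"
    unfolding W_def by (intro continuous_intros)
  ultimately have "W T / D T - W 0 / D 0 \<le> integral {0..T} W"
    using T(1) deriv by (intro diff_le_integral_of_deriv_le)
  moreover have "D T = s" and "D 0 = nu - a + s"
    using T unfolding D_def by simp_all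
  ultimately show ?thesis
    unfolding s_def by simp
qed

lemma integral_laplace_right_ge:
  fixes nu a T U :: real
  assumes nu: "nu \<ge> 1" and a: "a > 0" and T: "T \<le> U" "a * exp T = nu"
  defines "W \<equiv> \<lambda>t. exp (nu*t - a * exp t)"
  shows "W T / sqrt nu - W U / (a * exp U - nu + sqrt nu) \<le> integral {T..U} W"
proof -
  define s where "s = sqrt nu"
  have s1: "s \<ge> 1" and ss: "s^2 = nu"
    using nu by (simp_all add: s_def)
  define D where "D = (\<lambda>t. a * exp t - nu + s)"
  define g where "g = (\<lambda>t. W t * (((a * exp t - nu) * D t + a * exp t) / (D t)^2))"
  have gap: "a * exp t - nu \<ge> 0" if "t \<in> {T..U}" for t
    using that a T by (smt (verit) atLeastAtMost_iff exp_le_cancel_iff mult_left_mono)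
  have deriv: "((\<lambda>t. - (W t / D t)) has_real_derivative g t) (at t within {T..U})"
    if "t \<in> {T..U}" for t
  proof -
    have "D t \<noteq> 0"
      using gap[OF that] s1 unfolding D_def by linarith
    then have "((\<lambda>t. exp (nu*t - a * exp t) / (a * exp t - nu + s)) has_real_derivative
        ((exp (nu*t - a * exp t) * (nu * 1 - a * exp t)) * (a * exp t - nu + s)
          - exp (nu*t - a * exp t) * (a * exp t - 0 + 0)) / (a * exp t - nu + s)^2)
        (at t within {T..U})"
      unfolding D_def
      by (intro derivative_eq_intros DERIV_divide[THEN DERIV_cong]) (auto simp: power2_eq_square)
    then show ?thesis
      unfolding g_def W_def D_def
      by (rule DERIV_minus[THEN DERIV_cong])
        (simp add: algebra_simps diff_divide_distrib add_divide_distrib)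
  qed
  have "g t \<le> W t" if "t \<in> {T..U}" for t
  proof -
    have "s * ((a * exp t - nu) + s) - a * exp t = (s - 1) * (a * exp t - nu)"
      using ss by (simp add: power2_eq_square algebra_simps)
    moreover have "0 \<le> (s - 1) * (a * exp t - nu)"
      using gap[OF that] s1 by simp
    ultimately have "a * exp t \<le> s * ((a * exp t - nu) + s)"
      by linarith
    then have "((a * exp t - nu) * D t + a * exp t) / (D t)^2 \<le> 1"
      using gap[OF that] s1 unfolding D_def by (intro quotient_factor_le_one) auto
    then have "W t * (((a * exp t - nu) * D t + a * exp t) / (D t)^2) \<le> W t * 1"
      by (intro mult_left_mono) (auto simp: W_def)
    then show ?thesis
      unfolding g_def by simp
  qed
  moreover have "continuous_on {T..U} W"
    unfolding W_def by (intro continuous_intros)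
  ultimately have "- (W U / D U) - - (W T / D T) \<le> integral {T..U} W"
    using T(1) deriv by (intro diff_le_integral_of_deriv_le)
  moreover have "D T = s" and "D U = a * exp U - nu + s"
    using T unfolding D_def by simp_all
  ultimately show ?thesis
    unfolding s_def by simp
qed

lemma besselK_ge_laplace_estimate:
  fixes nu a :: real
  assumes nu: "nu \<ge> 1" and a: "a > 0" and a_le: "a \<le> nu"
  defines "E \<equiv> exp (nu * ln (nu / a) - nu)"
  shows "exp (-a) / 2 * (2 * E / sqrt nu - exp (-a) / (nu - a + sqrt nu)
           - E * exp (nu * (3 - exp 2)) / (nu * exp 2 - nu + sqrt nu)) \<le> besselK nu (2 * a)"
proof -
  define T where "T = ln (nu / a)"
  define W where "W = (\<lambda>t. exp (nu*t - a * exp t))"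
  have T0: "T \<ge> 0" and aT: "a * exp T = nu"
    using a a_le nu unfolding T_def by simp_all
  have a_exp_T2: "a * exp (T + 2) = nu * exp 2"
    using aT by (simp add: exp_add mult.assoc[symmetric])
  have W_T: "W T = E" and W_0: "W 0 = exp (-a)"
    and W_T2: "W (T + 2) = E * exp (nu * (3 - exp 2))"
    unfolding W_def E_def T_def[symmetric] aT a_exp_T2
    by (simp_all flip: exp_add add: algebra_simps)
  have W_integrable: "W integrable_on {0..T+2}"
    unfolding W_def by (intro integrable_continuous_real continuous_intros)
  have "(\<lambda>t. exp (-a) / 2 * W t) integrable_on {0..T+2}"
    using W_integrable by (rule integrable_on_mult_right)
  then have "integral {0..T+2} (\<lambda>t. exp (-a) / 2 * W t)
      \<le> integral {0..T+2} (\<lambda>t. exp (- (2*a) * cosh t) * cosh (nu * t))"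
    using exp_laplace_le_besselK_integrand[OF a]
    by (intro integral_le) (auto simp: W_def intro!: integrable_continuous_real continuous_intros)
  also have "\<dots> \<le> besselK nu (2 * a)"
    using a nu by (intro integral_besselK_integrand_le_besselK) auto
  finally have K_ge: "exp (-a) / 2 * integral {0..T+2} W \<le> besselK nu (2 * a)"
    by simp
  have "integral {0..T} W + integral {T..T+2} W = integral {0..T+2} W"
    using T0 W_integrable by (intro Henstock_Kurzweil_Integration.integral_combine) auto
  moreover have "W T / sqrt nu - W 0 / (nu - a + sqrt nu) \<le> integral {0..T} W"
    unfolding W_def using nu a T0 aT by (rule integral_laplace_left_ge)
  moreover have "W T / sqrt nu - W (T+2) / (a * exp (T+2) - nu + sqrt nu) \<le> integral {T..T+2} W"
    unfolding W_def using nu a _ aT by (rule integral_laplace_right_ge) simp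
  ultimately have "2 * E / sqrt nu - exp (-a) / (nu - a + sqrt nu)
      - E * exp (nu * (3 - exp 2)) / (nu * exp 2 - nu + sqrt nu) \<le> integral {0..T+2} W"
    unfolding W_T W_0 W_T2 a_exp_T2 by linarith
  then show ?thesis
    using K_ge by (smt (verit) exp_gt_zero divide_pos_pos mult_left_mono)
qed

lemma exp_one_ge: "exp 1 \<ge> (2718/1000 :: real)"
  using e_approx_32 unfolding abs_le_iff by simp

lemma exp_four_gt_50: "exp 4 > (50 :: real)"
proof -
  have "(50 :: real) < (2718/1000)^4"
    by (simp add: eval_nat_numeral)
  also have "\<dots> \<le> exp 1 ^ 4"
    using exp_one_ge by (intro power_mono) auto
  finally show ?thesis
    by (simp flip: exp_of_nat_mult)
qed

lemma exp_two_gt_7: "exp 2 > (7 :: real)"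
proof -
  have "(7 :: real) < (2718/1000)^2"
    by (simp add: eval_nat_numeral)
  also have "\<dots> \<le> exp 1 ^ 2"
    using exp_one_ge by (intro power_mono) auto
  finally show ?thesis
    by (simp flip: exp_of_nat_mult)
qed

lemma pi_le_exp_half: "pi \<le> 2 * (98/100)^2 * exp (1/2 :: real)"
proof -
  have "(16416/10000 :: real)^2 \<le> exp (1/2) ^ 2"
    using exp_one_ge by (simp add: eval_nat_numeral flip: exp_add)
  then have "16416/10000 \<le> exp (1/2 :: real)"
    by (rule power2_le_imp_le) simp
  moreover have "pi \<le> (315/100 :: real)"
    using pi_approx by simp
  ultimately show ?thesis
    by (simp add: eval_nat_numeral)
qed

definition besselK_minorant :: "real \<Rightarrow> real \<Rightarrow> real" where
  "besselK_minorant nu z =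
     exp (1/2 * ln (pi / (z * exp 1)) - z + (nu - 1/2) * ln (2 * (nu - 1/2) / (z * exp 1)))"

lemma sub_half_mult_ln_ratio_le:
  fixes nu :: real
  assumes "nu \<ge> 1"
  shows "(nu - 1/2) * (ln (nu - 1/2) - ln nu) \<le> - 1/4"
proof -
  have "ln ((nu - 1/2) / nu) \<le> (nu - 1/2) / nu - 1"
    using assms by (intro ln_le_minus_one) auto
  then have "(nu - 1/2) * (ln (nu - 1/2) - ln nu) \<le> (nu - 1/2) * ((nu - 1/2) / nu - 1)"
    using assms by (intro mult_left_mono) (auto simp: ln_div)
  also have "\<dots> \<le> - 1/4"
    using assms by (simp add: field_simps)
  finally show ?thesis .
qed

text \<open>The constant 98/100 exceeds sqrt(pi / 2) e^(-1/4), the bound on g_nu(2a) relative to the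
  peak term e^(-2a) W(T) / sqrt nu.\<close>
lemma besselK_minorant_le:
  fixes nu a :: real
  assumes nu: "nu \<ge> 1" and a: "a > 0"
  shows "besselK_minorant nu (2 * a)
           \<le> 98/100 * exp (-a)^2 * (exp (nu * ln (nu / a) - nu) / sqrt nu)"
proof -
  define m where "m = nu - 1/2"
  have m0: "m > 0"
    using nu by (simp add: m_def)
  define A where "A = 1/2 * ln (pi / (2 * a * exp 1)) - 2 * a + m * ln (2 * m / (2 * a * exp 1))"
  define R where "R = ln (98/100) - 2 * a + (nu * ln (nu / a) - nu) - 1/2 * ln nu"
  have "ln pi \<le> ln (2 * (98/100)^2 * exp (1/2 :: real))"
    using pi_le_exp_half by simp
  then have ln_pi: "ln pi \<le> ln 2 + 2 * ln (98/100) + 1/2"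
    by (simp add: ln_mult ln_realpow)
  have "A = 1/2 * ln pi - 1/2 * ln 2 - 1/2 * ln a - 1/2 - 2 * a + m * ln m - m * ln a - m"
    unfolding A_def using a m0 by (simp add: ln_div ln_mult algebra_simps)
  moreover have "R = ln (98/100) - 2 * a + m * ln nu - m * ln a - 1/2 * ln a - m - 1/2"
    unfolding R_def using a nu by (simp add: ln_div m_def algebra_simps)
  moreover have "m * (ln m - ln nu) \<le> - 1/4"
    unfolding m_def using nu by (rule sub_half_mult_ln_ratio_le)
  ultimately have "exp A \<le> exp R"
    using ln_pi by (simp add: algebra_simps)
  also have "exp R = 98/100 * exp (-a)^2 * (exp (nu * ln (nu / a) - nu) / sqrt nu)"
  proof -
    have "R = ln (98/100) + (-a) + (-a) + (nu * ln (nu / a) - nu) - 1/2 * ln nu"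
      by (simp add: R_def)
    then have "exp R = exp (ln (98/100)) * exp (-a) * exp (-a) * exp (nu * ln (nu / a) - nu)
        / exp (1/2 * ln nu)"
      by (simp only: exp_diff exp_add)
    moreover have "exp (1/2 * ln nu) = sqrt nu"
      using nu powr_half_sqrt[of nu] by (simp add: powr_def)
    ultimately show ?thesis
      by (simp add: power2_eq_square)
  qed
  finally show ?thesis
    unfolding besselK_minorant_def m_def[symmetric] A_def[symmetric] .
qed

lemma laplace_tail_le:
  fixes nu E :: real
  assumes nu: "nu \<ge> 1" and E: "E \<ge> 0"
  shows "E * exp (nu * (3 - exp 2)) / (nu * exp 2 - nu + sqrt nu) \<le> E / sqrt nu / 50"
proof -
  have "nu * (3 - exp 2) \<le> 3 - exp 2"
    using mult_right_mono_neg[OF nu, of "3 - exp 2"] exp_two_gt_7 by simp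
  then have "nu * (3 - exp 2) \<le> -4"
    using exp_two_gt_7 by linarith
  then have "exp (nu * (3 - exp 2)) \<le> exp (-4)"
    by simp
  also have "\<dots> \<le> 1/50"
    using exp_four_gt_50 by (simp add: exp_minus field_simps)
  finally have tail: "exp (nu * (3 - exp 2)) \<le> 1/50" .
  have "nu * 1 \<le> nu * exp 2"
    using nu exp_two_gt_7 by (intro mult_left_mono) auto
  then have den: "sqrt nu \<le> nu * exp 2 - nu + sqrt nu"
    by simp
  have sqrt_pos: "0 < sqrt nu"
    using nu by simp
  then have den_prod: "0 < (nu * exp 2 - nu + sqrt nu) * sqrt nu"
    using den by (intro mult_pos_pos) linarith+
  have "E * exp (nu * (3 - exp 2)) / (nu * exp 2 - nu + sqrt nu)
      \<le> E * exp (nu * (3 - exp 2)) / sqrt nu"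
    using E den_prod by (intro divide_left_mono[OF den]) auto
  also have "\<dots> \<le> E * (1/50) / sqrt nu"
    using tail E nu by (intro divide_right_mono mult_left_mono) auto
  finally show ?thesis
    by simp
qed

lemma laplace_peak_ge:
  fixes nu a :: real
  assumes nu: "nu \<ge> 1" and a: "a > 0" and ea: "exp 1 * a \<le> nu"
  shows "1 / (exp 1 * a) \<le> exp (nu * ln (nu / a) - nu) / sqrt nu"
proof -
  have "exp 1 \<le> nu / a"
    using ea a by (simp add: field_simps)
  then have T: "1 \<le> ln (nu / a)"
    using a nu by (simp add: ln_ge_iff)
  have "nu / (exp 1 * a) = exp (ln (nu / a) - 1)"
    using a nu by (simp add: exp_diff)
  also have "\<dots> \<le> exp (nu * ln (nu / a) - nu)"
    using mult_right_mono[OF nu, of "ln (nu / a) - 1"] T by (simp add: algebra_simps)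
  finally have "1 / (exp 1 * a) \<le> exp (nu * ln (nu / a) - nu) / nu"
    using nu by (simp add: field_simps)
  also have "\<dots> \<le> exp (nu * ln (nu / a) - nu) / sqrt nu"
  proof -
    have "sqrt nu * 1 \<le> sqrt nu * sqrt nu"
      using nu by (intro mult_left_mono) auto
    then show ?thesis
      using nu by (intro divide_left_mono) auto
  qed
  finally show ?thesis .
qed

lemma laplace_estimate_gt:
  fixes a D y :: real
  assumes a: "a > 0" and D: "D \<ge> 1628/1000" and y: "y \<ge> 1 / (exp 1 * a)"
  shows "98/100 * exp (-a)^2 * y < exp (-a) / 2 * (2 * y - exp (-a) / D - y / 50)"
proof -
  define x where "x = exp (-a)"
  have x0: "x > 0" and x1: "x \<le> 1" and xa: "exp a * x = 1"
    using a by (auto simp: x_def exp_add[symmetric])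
  have "exp 1 * a < 272/100 * a"
    using mult_strict_right_mono[OF e_less_272 a] .
  also have "\<dots> < 2 * (1628/1000) * (1/100 + 99/100 * a)"
    using a by (simp add: field_simps)
  also have "\<dots> \<le> 2 * D * (99/100 * exp a - 98/100)"
  proof -
    have "1/100 + 99/100 * a \<le> 99/100 * exp a - 98/100"
      using exp_ge_add_one_self[of a] by linarith
    then show ?thesis
      using D a by (intro mult_mono) auto
  qed
  finally have "exp 1 * a * x < 2 * D * (99/100 * exp a - 98/100) * x"
    using x0 by simp
  also have "\<dots> = 2 * D * (99/100 - 98/100 * x)"
    using xa by (simp add: algebra_simps)
  finally have "x / (2 * D) < (99/100 - 98/100 * x) * (1 / (exp 1 * a))"
    using D a by (simp add: field_simps)
  also have "\<dots> \<le> (99/100 - 98/100 * x) * y"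
    using x1 y by (intro mult_left_mono) auto
  finally have "x * (x / (2 * D)) < x * ((99/100 - 98/100 * x) * y)"
    using x0 by (rule mult_strict_left_mono)
  then show ?thesis
    unfolding x_def[symmetric] using D by (simp add: power2_eq_square field_simps)
qed

lemma besselK_minorant_less_besselK:
  fixes nu z :: real
  assumes nu: "nu \<ge> 1" and z: "z > 0" and small: "exp 1 * z < 2 * (nu - 1/2)"
  shows "besselK_minorant nu z < besselK nu z"
proof -
  define a where "a = z / 2"
  define y where "y = exp (nu * ln (nu / a) - nu) / sqrt nu"
  define D where "D = nu - a + sqrt nu"
  have a: "a > 0" and z_eq: "z = 2 * a"
    using z by (simp_all add: a_def)
  have ea: "exp 1 * a \<le> nu"
    using small by (simp add: a_def)
  have "2718/1000 * a \<le> exp 1 * a"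
    using exp_one_ge a by (intro mult_right_mono) auto
  then have a_le: "a \<le> nu" and "2718/1000 * a \<le> nu"
    using ea a by linarith+
  moreover have "1 \<le> sqrt nu"
    using nu by simp
  ultimately have D: "D \<ge> 1628/1000"
    unfolding D_def using nu by linarith
  have "besselK_minorant nu z \<le> 98/100 * exp (-a)^2 * y"
    unfolding z_eq y_def using nu a by (rule besselK_minorant_le)
  also have "\<dots> < exp (-a) / 2 * (2 * y - exp (-a) / D - y / 50)"
    using a D laplace_peak_ge[OF nu a ea] unfolding y_def by (rule laplace_estimate_gt)
  also have "\<dots> \<le> exp (-a) / 2 * (2 * y - exp (-a) / D
      - exp (nu * ln (nu / a) - nu) * exp (nu * (3 - exp 2)) / (nu * exp 2 - nu + sqrt nu))"
    using laplace_tail_le[OF nu, of "exp (nu * ln (nu / a) - nu)"] unfolding y_def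
    by (intro mult_left_mono) auto
  also have "\<dots> \<le> besselK nu z"
    using besselK_ge_laplace_estimate[OF nu a a_le]
    unfolding z_eq y_def D_def by (simp add: times_divide_eq_right)
  finally show ?thesis .
qed

lemma besselK_minorant_antimono:
  fixes nu z z' :: real
  assumes nu: "nu \<ge> 1" and z: "z > 0" and "z \<le> z'"
  shows "besselK_minorant nu z' \<le> besselK_minorant nu z"
proof -
  have "ln (pi / (z' * exp 1)) \<le> ln (pi / (z * exp 1))"
    using assms by (subst ln_le_cancel_iff) (auto intro!: divide_left_mono mult_right_mono)
  moreover have "ln (2 * (nu - 1/2) / (z' * exp 1)) \<le> ln (2 * (nu - 1/2) / (z * exp 1))"
    using assms by (subst ln_le_cancel_iff) (auto intro!: divide_left_mono mult_right_mono)
  then have "(nu - 1/2) * ln (2 * (nu - 1/2) / (z' * exp 1))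
      \<le> (nu - 1/2) * ln (2 * (nu - 1/2) / (z * exp 1))"
    using nu by (intro mult_left_mono) auto
  ultimately show ?thesis
    unfolding besselK_minorant_def using assms(3) by simp
qed

lemma lambertW0_pos:
  fixes x :: real
  assumes x: "x > 0"
  shows "lambertW0 x > 0" and "lambertW0 x * exp (lambertW0 x) = x"
proof -
  have pos: "w > 0" if "w * exp w = x" for w :: real
    using that x by (smt (verit) exp_gt_zero mult_nonpos_nonneg)
  have "\<exists>w\<ge>0. w \<le> x \<and> w * exp w = x"
    using x by (intro IVT) (auto intro!: continuous_intros
        simp: mult_le_cancel_left1[of x "exp x", simplified])
  then obtain w where w: "w * exp w = x"
    by blast
  have "w' = w" if "w' \<ge> -1 \<and> w' * exp w' = x" for w'
  proof -
    have "strict_mono_on {0<..} (\<lambda>w :: real. w * exp w)"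
      by (rule strict_mono_onI) (auto intro: mult_strict_mono)
    then show ?thesis
      using that w pos by (metis greaterThan_iff strict_mono_on_eqD)
  qed
  then have "lambertW0 x = w"
    unfolding lambertW0_def using w pos[OF w] by (intro the_equality) auto
  then show "lambertW0 x > 0" and "lambertW0 x * exp (lambertW0 x) = x"
    using w pos[OF w] by simp_all
qed

lemma le_mult_ln_of_ge_div_lambertW0:
  fixes c L m :: real
  assumes c: "c > 0" and L: "L > 0" and m: "m \<ge> L / lambertW0 (c * L)"
  shows "L \<le> m * ln (c * m)" and "1 < c * m"
proof -
  define w where "w = lambertW0 (c * L)"
  have w: "w > 0" and w_exp: "w * exp w = c * L"
    unfolding w_def using c L by (simp_all add: lambertW0_pos)
  have m_ge: "L / w \<le> m"
    using m by (simp add: w_def)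
  have "exp w = c * (L / w)"
    using w_exp w by (simp add: field_simps)
  also have "\<dots> \<le> c * m"
    using mult_left_mono[OF m_ge, of c] c by simp
  finally have exp_le: "exp w \<le> c * m" .
  then show "1 < c * m"
    using w by (smt (verit) one_less_exp_iff)
  then have "w \<le> ln (c * m)"
    using exp_le by (simp add: ln_ge_iff)
  moreover have "L / w > 0"
    using L w by simp
  ultimately have "L / w * w \<le> m * ln (c * m)"
    using m_ge w by (intro mult_mono) auto
  then show "L \<le> m * ln (c * m)"
    using w by simp
qed

theorem proposition1:
  fixes B z nu z0 :: real
  assumes "B > 0" and "z > 0"
    and "z0 = max z (pi / (B^2 * exp 1))"
    and "nu \<ge> 1"
    and "nu \<ge> 1/2 + (ln B + z0 - 1/2 * ln (pi / (z0 * exp 1))) /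
           lambertW0 (2 / (z0 * exp 1) * (ln B + z0 - 1/2 * ln (pi / (z0 * exp 1))))"
  shows "besselK nu z > B"
proof -
  note B = assms(1) and z = assms(2) and nu = assms(4)
  define L where "L = ln B + z0 - 1/2 * ln (pi / (z0 * exp 1))"
  have z_le: "z \<le> z0" and z0: "z0 > 0" and "pi / (B^2 * exp 1) \<le> z0"
    using assms(2,3) by auto
  then have "pi / (z0 * exp 1) \<le> B^2"
    using B by (simp add: field_simps)
  then have "ln (pi / (z0 * exp 1)) \<le> 2 * ln B"
    using B z0 by (simp add: ln_realpow flip: ln_le_cancel_iff)
  then have L: "L > 0"
    using z0 by (simp add: L_def)
  have c: "2 / (z0 * exp 1) > 0"
    using z0 by simp
  have "nu - 1/2 \<ge> L / lambertW0 (2 / (z0 * exp 1) * L)"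
    using assms(5) by (simp add: L_def)
  note threshold = le_mult_ln_of_ge_div_lambertW0[OF c L this]
  have "ln B \<le> 1/2 * ln (pi / (z0 * exp 1)) - z0 + (nu - 1/2) * ln (2 * (nu - 1/2) / (z0 * exp 1))"
    using threshold(1) by (simp add: L_def)
  then have "exp (ln B) \<le> besselK_minorant nu z0"
    unfolding besselK_minorant_def by simp
  then have "B \<le> besselK_minorant nu z0"
    using B by simp
  also have "\<dots> \<le> besselK_minorant nu z"
    using nu z z_le by (rule besselK_minorant_antimono)
  also have "\<dots> < besselK nu z"
  proof (rule besselK_minorant_less_besselK[OF nu z])
    have "exp 1 * z0 < 2 * (nu - 1/2)"
      using threshold(2) z0 by (simp add: field_simps)
    then show "exp 1 * z < 2 * (nu - 1/2)"
      using z_le by (smt (verit) exp_gt_zero mult_left_mono)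
  qed
  finally show ?thesis .
qed

end
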